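(* Let $A=\sum_{j=1}^nE_j$ where $n\in\mathbb N$ and $E_j$ are rank-one projections (not necessarily orthogonal), and let $\xi$ be a sequence with $0\le\xi_j\le1$ for all $j$ and $\sum_{j=1}^\infty\xi_j=\operatorname{tr}(A)$. Then $\xi\in\operatorname{Adm}(A)$.
   Context: $\operatorname{Adm}(A)$ is the set of sequences $\xi\in\ell^\infty_+$ such that $A=\sum_j\xi_jP_j$ for some rank-one projections $P_j$ (series converging in the strong operator topology if infinite). *)

theory Defs
  imports Complex_Main
begin

text \<open>The separable Hilbert space is modelled concretely as l2(N) of complex sequences.
  Operators are functions on sequences, only their behaviour on l2 matters.\<close>

definition l2 :: "(nat \<Rightarrow> complex) set" where
  "l2 = {x. summable (\<lambda>i. (cmod (x i))^2)}"

definition l2_inner :: "(nat \<Rightarrow> complex) \<Rightarrow> (nat \<Rightarrow> complex) \<Rightarrow> complex" where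
  "l2_inner x y = (\<Sum>i. x i * cnj (y i))"

definition l2_norm :: "(nat \<Rightarrow> complex) \<Rightarrow> real" where
  "l2_norm x = sqrt (\<Sum>i. (cmod (x i))^2)"

definition bounded_op :: "((nat \<Rightarrow> complex) \<Rightarrow> (nat \<Rightarrow> complex)) \<Rightarrow> bool" where
  "bounded_op T \<longleftrightarrow>
     (\<forall>x\<in>l2. T x \<in> l2) \<and>
     (\<forall>x\<in>l2. \<forall>y\<in>l2. \<forall>a b. T (\<lambda>i. a * x i + b * y i) = (\<lambda>i. a * T x i + b * T y i)) \<and>
     (\<exists>C. \<forall>x\<in>l2. l2_norm (T x) \<le> C * l2_norm x)"

definition rank_one_projection :: "((nat \<Rightarrow> complex) \<Rightarrow> (nat \<Rightarrow> complex)) \<Rightarrow> bool" where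
  "rank_one_projection P \<longleftrightarrow>
     bounded_op P \<and>
     (\<forall>x\<in>l2. P (P x) = P x) \<and>
     (\<forall>x\<in>l2. \<forall>y\<in>l2. l2_inner (P x) y = l2_inner x (P y)) \<and>
     (\<exists>v\<in>l2. v \<noteq> (\<lambda>_. 0) \<and> P ` l2 = {(\<lambda>i. c * v i) | c. True})"

definition std_basis :: "nat \<Rightarrow> (nat \<Rightarrow> complex)" where
  "std_basis k = (\<lambda>i. if i = k then 1 else 0)"

definition op_trace :: "((nat \<Rightarrow> complex) \<Rightarrow> (nat \<Rightarrow> complex)) \<Rightarrow> complex" where
  "op_trace T = (\<Sum>k. l2_inner (T (std_basis k)) (std_basis k))"

text \<open>Adm(A): sequences in l-infinity-plus with A = sum_j xi_j P_j, P_j rank-one projections,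
  the series converging in the strong operator topology.\<close>
definition Adm :: "((nat \<Rightarrow> complex) \<Rightarrow> (nat \<Rightarrow> complex)) \<Rightarrow> (nat \<Rightarrow> real) set" where
  "Adm A = {\<xi>. (\<forall>j. 0 \<le> \<xi> j) \<and> bdd_above (range \<xi>) \<and>
     (\<exists>P. (\<forall>j. rank_one_projection (P j)) \<and>
        (\<forall>x\<in>l2. (\<lambda>N. l2_norm (\<lambda>i. A x i - (\<Sum>j<N. complex_of_real (\<xi> j) * P j x i)))
                   \<longlonglongrightarrow> 0))}"

end

theory Submission
  imports Defs "HOL-Analysis.L2_Norm"
begin

text \<open>Each rank-one projection is \<open>P\<^sub>w x = \<langle>x, w\<rangle> w\<close> for a unit vector \<open>w\<close>, so
  \<open>tr A = n = \<Sum>\<^sub>j \<xi>\<^sub>j\<close>. The projections \<open>P\<^sub>0, \<dots>, P\<^sub>n\<^sub>-\<^sub>1\<close> making up \<open>A\<close> are redistributed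
  greedily, maintaining
    \<open>P\<^sub>0 + \<dots> + P\<^sub>k\<^sub>-\<^sub>1 = \<xi>\<^sub>0 Q\<^sub>0 + \<dots> + \<xi>\<^sub>N\<^sub>-\<^sub>1 Q\<^sub>N\<^sub>-\<^sub>1 + r P\<^sub>R\<close>
  with a residual weight \<open>r \<ge> 0\<close> on a unit vector \<open>R\<close>. If \<open>\<xi>\<^sub>N \<le> r\<close>, the next summand \<open>\<xi>\<^sub>N P\<^sub>R\<close>
  is taken from the residual. Otherwise \<open>r P\<^sub>R + P\<^sub>k\<close>, which acts on a plane and has trace
  \<open>r + 1\<close>, equals \<open>\<xi>\<^sub>N P\<^sub>p + (r + 1 - \<xi>\<^sub>N) P\<^sub>q\<close>, where \<open>p\<close> and \<open>q\<close> are obtained from \<open>\<surd>r R\<close> and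
  \<open>w\<^sub>k\<close> by a rotation whose angle is chosen with the intermediate value theorem. Because
  \<open>\<Sum>\<^sub>j \<xi>\<^sub>j = n\<close>, the vectors never run out, eventually all \<open>n\<close> of them are used, and from then
  on the remainder \<open>(n - \<Sum>\<^sub>j\<^sub><\<^sub>N \<xi>\<^sub>j) P\<^sub>R\<close> tends to zero.\<close>

section \<open>Inner products on l2\<close>

lemma l2_lincomb:
  assumes "x \<in> l2" "y \<in> l2"
  shows "(\<lambda>i. a * x i + b * y i) \<in> l2"
proof -
  have "(cmod (a * x i + b * y i))\<^sup>2 \<le> 2 * (cmod a)\<^sup>2 * (cmod (x i))\<^sup>2 + 2 * (cmod b)\<^sup>2 * (cmod (y i))\<^sup>2"
    for i
  proof -
    have "cmod (a * x i + b * y i) \<le> cmod a * cmod (x i) + cmod b * cmod (y i)"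
      using norm_triangle_ineq[of "a * x i" "b * y i"] by (simp add: norm_mult)
    then have "(cmod (a * x i + b * y i))\<^sup>2 \<le> (cmod a * cmod (x i) + cmod b * cmod (y i))\<^sup>2"
      by (simp add: power_mono)
    also have "\<dots> \<le> 2 * (cmod a * cmod (x i))\<^sup>2 + 2 * (cmod b * cmod (y i))\<^sup>2"
      using sum_squares_bound[of "cmod a * cmod (x i)" "cmod b * cmod (y i)"]
      by (simp add: power2_eq_square algebra_simps)
    finally show ?thesis by (simp add: power_mult_distrib)
  qed
  moreover have "summable (\<lambda>i. 2 * (cmod a)\<^sup>2 * (cmod (x i))\<^sup>2 + 2 * (cmod b)\<^sup>2 * (cmod (y i))\<^sup>2)"
    using assms by (intro summable_add summable_mult) (auto simp: l2_def)
  ultimately show ?thesis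
    unfolding l2_def by (auto intro: summable_comparison_test')
qed

lemma l2_scale: "x \<in> l2 \<Longrightarrow> (\<lambda>i. a * x i) \<in> l2"
  using l2_lincomb[of x x a 0] by simp

lemma summable_norm_l2_inner_terms:
  assumes "x \<in> l2" "y \<in> l2"
  shows "summable (\<lambda>i. cmod (x i * cnj (y i)))"
proof (rule summable_comparison_test')
  show "summable (\<lambda>i. (cmod (x i))\<^sup>2 + (cmod (y i))\<^sup>2)"
    using assms by (intro summable_add) (auto simp: l2_def)
  show "norm (cmod (x i * cnj (y i))) \<le> (cmod (x i))\<^sup>2 + (cmod (y i))\<^sup>2" for i
  proof -
    have "2 * (cmod (x i) * cmod (y i)) \<le> (cmod (x i))\<^sup>2 + (cmod (y i))\<^sup>2"
      using sum_squares_bound[of "cmod (x i)" "cmod (y i)"] by (simp add: power2_eq_square)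
    moreover have "0 \<le> cmod (x i) * cmod (y i)" by simp
    moreover have "norm (cmod (x i * cnj (y i))) = cmod (x i) * cmod (y i)" by (simp add: norm_mult)
    ultimately show ?thesis by linarith
  qed
qed

lemma sums_l2_inner:
  "x \<in> l2 \<Longrightarrow> y \<in> l2 \<Longrightarrow> (\<lambda>i. x i * cnj (y i)) sums l2_inner x y"
  unfolding l2_inner_def
  using summable_norm_cancel[OF summable_norm_l2_inner_terms] by blast

lemma l2_inner_lincomb_left:
  assumes "x \<in> l2" "y \<in> l2" "z \<in> l2"
  shows "l2_inner (\<lambda>i. a * x i + b * y i) z = a * l2_inner x z + b * l2_inner y z"
proof -
  have "(\<lambda>i. a * (x i * cnj (z i)) + b * (y i * cnj (z i))) sums (a * l2_inner x z + b * l2_inner y z)"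
    using assms by (intro sums_add sums_mult sums_l2_inner)
  then show ?thesis
    unfolding l2_inner_def by (simp add: sums_iff algebra_simps)
qed

lemma cnj_l2_inner:
  assumes "x \<in> l2" "y \<in> l2"
  shows "cnj (l2_inner x y) = l2_inner y x"
  using sums_cnj[THEN iffD2, OF sums_l2_inner[OF assms]]
  unfolding l2_inner_def by (simp add: sums_iff mult.commute)

lemma l2_inner_lincomb_right:
  assumes "x \<in> l2" "y \<in> l2" "z \<in> l2"
  shows "l2_inner x (\<lambda>i. a * y i + b * z i) = cnj a * l2_inner x y + cnj b * l2_inner x z"
proof -
  have "l2_inner x (\<lambda>i. a * y i + b * z i) = cnj (l2_inner (\<lambda>i. a * y i + b * z i) x)"
    using assms by (simp add: cnj_l2_inner l2_lincomb)
  also have "\<dots> = cnj a * l2_inner x y + cnj b * l2_inner x z"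
    using assms by (simp add: l2_inner_lincomb_left cnj_l2_inner)
  finally show ?thesis .
qed

lemma l2_inner_scale_left: "x \<in> l2 \<Longrightarrow> y \<in> l2 \<Longrightarrow> l2_inner (\<lambda>i. a * x i) y = a * l2_inner x y"
  using l2_inner_lincomb_left[of x x y a 0] by simp

lemma l2_inner_scale_right: "x \<in> l2 \<Longrightarrow> y \<in> l2 \<Longrightarrow> l2_inner x (\<lambda>i. a * y i) = cnj a * l2_inner x y"
  using l2_inner_lincomb_right[of x y y a 0] by simp

lemma l2_inner_self: "x \<in> l2 \<Longrightarrow> l2_inner x x = of_real (\<Sum>i. (cmod (x i))\<^sup>2)"
  unfolding l2_inner_def
  by (simp add: complex_norm_square[symmetric] suminf_of_real l2_def)

lemma l2_eq_zero_if_norm_zero: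
  "x \<in> l2 \<Longrightarrow> (\<Sum>i. (cmod (x i))\<^sup>2) = 0 \<Longrightarrow> x = (\<lambda>_. 0)"
  using suminf_eq_zero_iff[of "\<lambda>i. (cmod (x i))\<^sup>2"] by (auto simp: l2_def)

lemma l2_norm_scale: "x \<in> l2 \<Longrightarrow> l2_norm (\<lambda>i. a * x i) = cmod a * l2_norm x"
  by (simp add: l2_norm_def l2_def norm_mult power_mult_distrib suminf_mult real_sqrt_mult)

lemma l2_inner_le_norm_mult:
  assumes "x \<in> l2" "y \<in> l2"
  shows "cmod (l2_inner x y) \<le> l2_norm x * l2_norm y"
proof -
  have partial: "(\<Sum>i<N. cmod (x i * cnj (y i))) \<le> l2_norm x * l2_norm y" for N
  proof -
    have "(\<Sum>i<N. cmod (x i * cnj (y i))) = (\<Sum>i<N. \<bar>cmod (x i)\<bar> * \<bar>cmod (y i)\<bar>)"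
      by (simp add: norm_mult)
    also have "\<dots> \<le> L2_set (\<lambda>i. cmod (x i)) {..<N} * L2_set (\<lambda>i. cmod (y i)) {..<N}"
      by (rule L2_set_mult_ineq)
    also have "\<dots> \<le> l2_norm x * l2_norm y"
      unfolding L2_set_def l2_norm_def using assms
      by (intro mult_mono real_sqrt_le_mono sum_le_suminf)
        (auto simp: l2_def intro!: suminf_nonneg sum_nonneg)
    finally show ?thesis .
  qed
  have "cmod (l2_inner x y) \<le> (\<Sum>i. cmod (x i * cnj (y i)))"
    unfolding l2_inner_def by (intro summable_norm summable_norm_l2_inner_terms assms)
  also have "\<dots> \<le> l2_norm x * l2_norm y"
    by (intro suminf_le_const summable_norm_l2_inner_terms assms partial)
  finally show ?thesis .
qed

lemma std_basis_l2: "std_basis k \<in> l2"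
  and sum_norm_std_basis: "(\<Sum>i. (cmod (std_basis k i))\<^sup>2) = 1"
proof -
  have "(\<lambda>i. (cmod (std_basis k i))\<^sup>2) = (\<lambda>i. if i = k then 1 else 0)"
    by (auto simp: std_basis_def)
  then have "(\<lambda>i. (cmod (std_basis k i))\<^sup>2) sums 1"
    using sums_single[of k "\<lambda>_. 1::real"] by simp
  then show "std_basis k \<in> l2" "(\<Sum>i. (cmod (std_basis k i))\<^sup>2) = 1"
    by (auto simp: l2_def sums_iff)
qed

lemma l2_inner_std_basis_right: "l2_inner y (std_basis k) = y k"
  using sums_single[of k y] unfolding l2_inner_def std_basis_def
  by (simp add: if_distrib sums_iff cong: if_cong)

lemma l2_inner_std_basis_left: "l2_inner (std_basis k) y = cnj (y k)"
proof -
  have "(\<lambda>i. std_basis k i * cnj (y i)) = (\<lambda>i. if i = k then cnj (y i) else 0)"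
    by (auto simp: std_basis_def)
  then show ?thesis
    using sums_single[of k "\<lambda>i. cnj (y i)"] unfolding l2_inner_def by (simp add: sums_iff)
qed

section \<open>Projections onto unit vectors\<close>

definition unit_l2 :: "(nat \<Rightarrow> complex) \<Rightarrow> bool" where
  "unit_l2 w \<longleftrightarrow> w \<in> l2 \<and> (\<Sum>i. (cmod (w i))\<^sup>2) = 1"

definition proj_onto :: "(nat \<Rightarrow> complex) \<Rightarrow> (nat \<Rightarrow> complex) \<Rightarrow> (nat \<Rightarrow> complex)" where
  "proj_onto w x = (\<lambda>i. l2_inner x w * w i)"

lemma unit_l2_std_basis: "unit_l2 (std_basis k)"
  by (simp add: unit_l2_def std_basis_l2 sum_norm_std_basis)

lemma unit_l2_imp_l2_inner_self: "unit_l2 w \<Longrightarrow> l2_inner w w = 1"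
  by (simp add: unit_l2_def l2_inner_self)

lemma sum_norm_sq_scale:
  "x \<in> l2 \<Longrightarrow> (\<Sum>i. (cmod (a * x i))\<^sup>2) = (cmod a)\<^sup>2 * (\<Sum>i. (cmod (x i))\<^sup>2)"
  by (simp add: l2_def norm_mult power_mult_distrib suminf_mult)

lemma sum_norm_sq_pos:
  assumes "w \<in> l2" "w \<noteq> (\<lambda>_. 0)"
  shows "0 < (\<Sum>i. (cmod (w i))\<^sup>2)"
proof -
  have "0 \<le> (\<Sum>i. (cmod (w i))\<^sup>2)"
    using assms(1) unfolding l2_def by (auto intro: suminf_nonneg)
  moreover have "(\<Sum>i. (cmod (w i))\<^sup>2) \<noteq> 0"
    using assms l2_eq_zero_if_norm_zero by blast
  ultimately show ?thesis by linarith
qed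

lemma unit_l2_normalize:
  assumes "w \<in> l2" "w \<noteq> (\<lambda>_. 0)"
  shows "unit_l2 (\<lambda>i. of_real (1 / sqrt (\<Sum>i. (cmod (w i))\<^sup>2)) * w i)"
proof -
  define m where "m = (\<Sum>i. (cmod (w i))\<^sup>2)"
  have "m > 0"
    unfolding m_def by (rule sum_norm_sq_pos[OF assms])
  then show ?thesis
    using assms(1) sum_norm_sq_scale[OF assms(1), of "of_real (1 / sqrt m)"]
    unfolding unit_l2_def m_def[symmetric]
    by (simp only: l2_scale norm_of_real) (simp add: power_divide)
qed

lemma proj_onto_l2: "w \<in> l2 \<Longrightarrow> proj_onto w x \<in> l2"
  unfolding proj_onto_def by (rule l2_scale)

lemma proj_onto_scale:
  "w \<in> l2 \<Longrightarrow> x \<in> l2 \<Longrightarrow> proj_onto (\<lambda>i. of_real a * w i) x = (\<lambda>i. of_real (a\<^sup>2) * proj_onto w x i)"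
  unfolding proj_onto_def by (simp add: l2_inner_scale_right power2_eq_square mult_ac)

lemma proj_onto_eq_scaled_unit:
  assumes "w \<in> l2"
  obtains p where "unit_l2 p"
    and "\<forall>x\<in>l2. proj_onto w x = (\<lambda>i. of_real (\<Sum>i. (cmod (w i))\<^sup>2) * proj_onto p x i)"
proof (cases "w = (\<lambda>_. 0)")
  case True
  then show ?thesis
    using that[of "std_basis 0"] by (simp add: unit_l2_std_basis proj_onto_def)
next
  case False
  define m where "m = (\<Sum>i. (cmod (w i))\<^sup>2)"
  define p where "p = (\<lambda>i. of_real (1 / sqrt m) * w i)"
  have "m > 0"
    unfolding m_def by (rule sum_norm_sq_pos[OF assms False])
  have "\<forall>x\<in>l2. proj_onto w x = (\<lambda>i. of_real m * proj_onto p x i)"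
  proof
    fix x assume "x \<in> l2"
    then have "proj_onto p x = (\<lambda>i. of_real ((1 / sqrt m)\<^sup>2) * proj_onto w x i)"
      unfolding p_def by (rule proj_onto_scale[OF assms])
    with \<open>m > 0\<close> show "proj_onto w x = (\<lambda>i. of_real m * proj_onto p x i)"
      by (simp add: power_divide)
  qed
  moreover have "unit_l2 p"
    unfolding p_def m_def using unit_l2_normalize[OF assms False] .
  ultimately show ?thesis
    using that unfolding m_def by blast
qed

lemma rank_one_projection_proj_onto:
  assumes "unit_l2 w"
  shows "rank_one_projection (proj_onto w)"
proof -
  have w: "w \<in> l2" and ww: "l2_inner w w = 1" and norm_w: "l2_norm w = 1"
    using assms by (simp_all add: unit_l2_def unit_l2_imp_l2_inner_self l2_norm_def)
  have "bounded_op (proj_onto w)"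
    unfolding bounded_op_def
  proof (intro conjI ballI allI exI)
    show "proj_onto w x \<in> l2" for x
      by (rule proj_onto_l2[OF w])
    show "proj_onto w (\<lambda>i. a * x i + b * y i) = (\<lambda>i. a * proj_onto w x i + b * proj_onto w y i)"
      if "x \<in> l2" "y \<in> l2" for x y a b
      using that w by (simp add: proj_onto_def l2_inner_lincomb_left algebra_simps)
    show "l2_norm (proj_onto w x) \<le> 1 * l2_norm x" if "x \<in> l2" for x
      using l2_inner_le_norm_mult[OF that w] norm_w
      by (simp add: proj_onto_def l2_norm_scale[OF w])
  qed
  moreover have "proj_onto w (proj_onto w x) = proj_onto w x" if "x \<in> l2" for x
    using that w ww by (simp add: proj_onto_def l2_inner_scale_left)
  moreover have "l2_inner (proj_onto w x) y = l2_inner x (proj_onto w y)" if "x \<in> l2" "y \<in> l2" for x y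
    using that w by (simp add: proj_onto_def l2_inner_scale_left l2_inner_scale_right cnj_l2_inner)
  moreover have "proj_onto w ` l2 = {(\<lambda>i. c * w i) | c. True}"
  proof (intro equalityI subsetI)
    fix z assume "z \<in> {(\<lambda>i. c * w i) | c. True}"
    then obtain c where z: "z = (\<lambda>i. c * w i)" by blast
    then have "z = proj_onto w z"
      using w ww by (simp add: proj_onto_def l2_inner_scale_left)
    then show "z \<in> proj_onto w ` l2"
      using l2_scale[OF w] z by blast
  qed (auto simp: proj_onto_def)
  moreover have "w \<noteq> (\<lambda>_. 0)"
    using assms by (auto simp: unit_l2_def)
  ultimately show ?thesis
    unfolding rank_one_projection_def using w by blast
qed

lemma rank_one_projection_imp_proj_onto:
  assumes "rank_one_projection E"
  obtains w where "unit_l2 w" "\<forall>x\<in>l2. E x = proj_onto w x"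
proof -
  obtain v where v: "v \<in> l2" "v \<noteq> (\<lambda>_. 0)" and range_E: "E ` l2 = {(\<lambda>i. c * v i) | c. True}"
    using assms unfolding rank_one_projection_def by blast
  have idem: "\<forall>x\<in>l2. E (E x) = E x"
    and self_adj: "\<forall>x\<in>l2. \<forall>y\<in>l2. l2_inner (E x) y = l2_inner x (E y)"
    using assms unfolding rank_one_projection_def by blast+
  define m where "m = (\<Sum>i. (cmod (v i))\<^sup>2)"
  define w where "w = (\<lambda>i. of_real (1 / sqrt m) * v i)"
  have w: "unit_l2 w"
    unfolding w_def m_def by (rule unit_l2_normalize[OF v])
  have "m > 0"
    unfolding m_def by (rule sum_norm_sq_pos[OF v])
  then have v_eq: "v = (\<lambda>i. of_real (sqrt m) * w i)"
    by (auto simp: w_def simp flip: of_real_mult)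
  have "w \<in> E ` l2"
    unfolding range_E w_def by blast
  then have Ew: "E w = w"
    using idem by auto
  have "E x = proj_onto w x" if x: "x \<in> l2" for x
  proof -
    obtain c where Ex: "E x = (\<lambda>i. c * v i)"
      using x range_E by blast
    then have "l2_inner (E x) w = c * of_real (sqrt m)"
      using w unfolding v_eq unit_l2_def
      by (simp add: mult.assoc[symmetric] l2_inner_scale_left unit_l2_imp_l2_inner_self[OF w])
    moreover have "l2_inner (E x) w = l2_inner x w"
      using self_adj x w Ew unfolding unit_l2_def by metis
    ultimately show ?thesis
      unfolding proj_onto_def Ex v_eq by (auto simp: mult.assoc)
  qed
  then show ?thesis
    using that w by blast
qed

lemma op_trace_sum_proj_onto:
  assumes w: "\<forall>m<n. unit_l2 (w m)"
    and A: "\<forall>x\<in>l2. A x = (\<lambda>i. \<Sum>m<n. proj_onto (w m) x i)"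
  shows "op_trace A = of_nat n"
proof -
  have diag: "l2_inner (A (std_basis k)) (std_basis k) = (\<Sum>m<n. of_real ((cmod (w m k))\<^sup>2))" for k
  proof -
    have "l2_inner (A (std_basis k)) (std_basis k) = (\<Sum>m<n. cnj (w m k) * w m k)"
      using A std_basis_l2
      by (simp add: l2_inner_std_basis_right l2_inner_std_basis_left proj_onto_def)
    also have "\<dots> = (\<Sum>m<n. of_real ((cmod (w m k))\<^sup>2))"
      by (intro sum.cong refl) (simp only: complex_norm_square mult.commute)
    finally show ?thesis .
  qed
  have "(\<lambda>k. of_real ((cmod (w m k))\<^sup>2)) sums (1 :: complex)" if "m < n" for m
  proof -
    have "(\<lambda>k. (cmod (w m k))\<^sup>2) sums 1"
      using w that summable_sums[of "\<lambda>k. (cmod (w m k))\<^sup>2"] by (simp add: unit_l2_def l2_def)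
    then show ?thesis
      using sums_of_real by fastforce
  qed
  then have "(\<lambda>k. \<Sum>m<n. of_real ((cmod (w m k))\<^sup>2)) sums (\<Sum>m<n. (1 :: complex))"
    by (intro sums_sum) simp
  then show ?thesis
    unfolding op_trace_def diag by (simp add: sums_iff)
qed

section \<open>Splitting two weighted projections\<close>

lemma sum_norm_sq_real_lincomb:
  assumes "unit_l2 u" "unit_l2 v"
  shows "(\<Sum>i. (cmod (of_real a * u i + of_real b * v i))\<^sup>2) = a\<^sup>2 + b\<^sup>2 + 2 * a * b * Re (l2_inner u v)"
proof -
  have u: "u \<in> l2" and v: "v \<in> l2"
    using assms by (simp_all add: unit_l2_def)
  define z where "z = (\<lambda>i. of_real a * u i + of_real b * v i)"
  have "l2_inner z z = of_real a * (of_real a * l2_inner u u + of_real b * l2_inner u v)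
      + of_real b * (of_real a * l2_inner v u + of_real b * l2_inner v v)"
    unfolding z_def using u v
    by (simp add: l2_inner_lincomb_left l2_inner_lincomb_right l2_lincomb)
  also have "\<dots> = of_real a * (of_real a + of_real b * l2_inner u v)
      + of_real b * (of_real a * cnj (l2_inner u v) + of_real b)"
    using assms u v by (simp add: unit_l2_imp_l2_inner_self cnj_l2_inner)
  finally have "Re (l2_inner z z) = a\<^sup>2 + b\<^sup>2 + 2 * a * b * Re (l2_inner u v)"
    by (simp add: algebra_simps power2_eq_square)
  moreover have "z \<in> l2"
    unfolding z_def using u v by (rule l2_lincomb)
  ultimately have "(\<Sum>i. (cmod (z i))\<^sup>2) = a\<^sup>2 + b\<^sup>2 + 2 * a * b * Re (l2_inner u v)"
    by (simp add: l2_inner_self)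
  then show ?thesis
    unfolding z_def .
qed

lemma proj_onto_rotation:
  fixes a b a' b' r :: real
  assumes "u \<in> l2" "v \<in> l2" "x \<in> l2"
    and "a\<^sup>2 + a'\<^sup>2 = r" "b\<^sup>2 + b'\<^sup>2 = 1" "a * b + a' * b' = 0"
  shows "proj_onto (\<lambda>i. of_real a * u i + of_real b * v i) x i
       + proj_onto (\<lambda>i. of_real a' * u i + of_real b' * v i) x i
       = of_real r * proj_onto u x i + proj_onto v x i"
proof -
  define X where "X = l2_inner x u"
  define Y where "Y = l2_inner x v"
  define U where "U = u i"
  define V where "V = v i"
  have "proj_onto (\<lambda>i. of_real a * u i + of_real b * v i) x i
       + proj_onto (\<lambda>i. of_real a' * u i + of_real b' * v i) x i
      = (of_real a * X + of_real b * Y) * (of_real a * U + of_real b * V)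
       + (of_real a' * X + of_real b' * Y) * (of_real a' * U + of_real b' * V)"
    unfolding proj_onto_def X_def Y_def U_def V_def using assms(1-3)
    by (simp add: l2_inner_lincomb_right)
  also have "\<dots> = of_real (a\<^sup>2 + a'\<^sup>2) * (X * U) + of_real (b\<^sup>2 + b'\<^sup>2) * (Y * V)
       + of_real (a * b + a' * b') * (X * V + Y * U)"
    by (simp add: algebra_simps power2_eq_square)
  also have "\<dots> = of_real r * proj_onto u x i + proj_onto v x i"
    unfolding proj_onto_def X_def Y_def U_def V_def using assms(4-6) by simp
  finally show ?thesis .
qed

definition splits_into ::
    "(nat \<Rightarrow> complex) \<Rightarrow> (nat \<Rightarrow> complex) \<Rightarrow> real \<Rightarrow> real \<Rightarrow> (nat \<Rightarrow> complex) \<Rightarrow> (nat \<Rightarrow> complex) \<Rightarrow> bool" where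
  "splits_into u v r c p q \<longleftrightarrow> unit_l2 p \<and> unit_l2 q \<and>
     (\<forall>x\<in>l2. \<forall>i. of_real r * proj_onto u x i + proj_onto v x i
                 = of_real c * proj_onto p x i + of_real (r + 1 - c) * proj_onto q x i)"

lemma exists_splits_into:
  assumes u: "unit_l2 u" and v: "unit_l2 v" and r: "0 \<le> r" "r < c" "c \<le> 1"
  shows "\<exists>p q. splits_into u v r c p q"
proof -
  have ul: "u \<in> l2" and vl: "v \<in> l2"
    using u v by (simp_all add: unit_l2_def)
  define s where "s = sqrt r"
  have s2: "s\<^sup>2 = r"
    using r unfolding s_def by simp
  define \<rho> where "\<rho> = Re (l2_inner u v)"
  define f where "f t = (s * cos t)\<^sup>2 + (sin t)\<^sup>2 + 2 * (s * cos t) * sin t * \<rho>" for t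
  have "continuous_on {0..pi/2} f"
    unfolding f_def by (intro continuous_intros)
  moreover have "f 0 = r" "f (pi/2) = 1"
    using s2 by (simp_all add: f_def)
  ultimately obtain t where t: "f t = c"
    using IVT'[of f 0 c "pi/2"] r by auto
  define y1 where "y1 = (\<lambda>i. of_real (s * cos t) * u i + of_real (sin t) * v i)"
  define y2 where "y2 = (\<lambda>i. of_real (- s * sin t) * u i + of_real (cos t) * v i)"
  have "(\<Sum>i. (cmod (y1 i))\<^sup>2) = c"
    unfolding y1_def sum_norm_sq_real_lincomb[OF u v] using t by (simp add: f_def \<rho>_def)
  moreover have "(\<Sum>i. (cmod (y2 i))\<^sup>2) = r + 1 - f t"
    unfolding y2_def sum_norm_sq_real_lincomb[OF u v] f_def \<rho>_def
    using s2 by (simp add: power_mult_distrib algebra_simps sin_squared_eq)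
  ultimately have norms: "(\<Sum>i. (cmod (y1 i))\<^sup>2) = c" "(\<Sum>i. (cmod (y2 i))\<^sup>2) = r + 1 - c"
    using t by simp_all
  have rotation: "proj_onto y1 x i + proj_onto y2 x i = of_real r * proj_onto u x i + proj_onto v x i"
    if "x \<in> l2" for x i
    unfolding y1_def y2_def using s2
    by (intro proj_onto_rotation[OF ul vl that])
       (simp_all add: power_mult_distrib algebra_simps sin_squared_eq)
  obtain p where p: "unit_l2 p" "\<forall>x\<in>l2. proj_onto y1 x = (\<lambda>i. of_real c * proj_onto p x i)"
    using proj_onto_eq_scaled_unit[of y1] l2_lincomb[OF ul vl] norms(1) unfolding y1_def by metis
  obtain q where q: "unit_l2 q" "\<forall>x\<in>l2. proj_onto y2 x = (\<lambda>i. of_real (r + 1 - c) * proj_onto q x i)"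
    using proj_onto_eq_scaled_unit[of y2] l2_lincomb[OF ul vl] norms(2) unfolding y2_def by metis
  show ?thesis
    unfolding splits_into_def using p q rotation by (intro exI[of _ p] exI[of _ q]) auto
qed

definition split_pair ::
    "(nat \<Rightarrow> complex) \<Rightarrow> (nat \<Rightarrow> complex) \<Rightarrow> real \<Rightarrow> real \<Rightarrow> (nat \<Rightarrow> complex) \<times> (nat \<Rightarrow> complex)" where
  "split_pair u v r c = (SOME (p, q). splits_into u v r c p q)"

lemma splits_into_split_pair:
  assumes "unit_l2 u" "unit_l2 v" "0 \<le> r" "r < c" "c \<le> 1" and "split_pair u v r c = (p, q)"
  shows "splits_into u v r c p q"
proof -
  have "\<exists>pq. case_prod (splits_into u v r c) pq"
    using exists_splits_into[OF assms(1-5)] by simp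
  from someI_ex[OF this] show ?thesis
    using assms(6) unfolding split_pair_def by simp
qed

section \<open>Greedy redistribution\<close>

record greedy_state =
  used_vectors :: nat
  residual_weight :: real
  residual_vector :: "nat \<Rightarrow> complex"

definition greedy_step ::
    "(nat \<Rightarrow> nat \<Rightarrow> complex) \<Rightarrow> real \<Rightarrow> greedy_state \<Rightarrow> greedy_state \<times> (nat \<Rightarrow> complex)" where
  "greedy_step w c s =
     (if c \<le> residual_weight s
      then (s\<lparr>residual_weight := residual_weight s - c\<rparr>, residual_vector s)
      else (case split_pair (residual_vector s) (w (used_vectors s)) (residual_weight s) c of
              (p, q) \<Rightarrow> (\<lparr>used_vectors = Suc (used_vectors s), residual_weight = residual_weight s + 1 - c,
                          residual_vector = q\<rparr>, p)))"

text \<open>The initial residual weight is 0, so the residual vector \<open>std_basis 0\<close> is a placeholder.\<close>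

primrec greedy_states :: "(nat \<Rightarrow> nat \<Rightarrow> complex) \<Rightarrow> (nat \<Rightarrow> real) \<Rightarrow> nat \<Rightarrow> greedy_state" where
  "greedy_states w \<xi> 0 = \<lparr>used_vectors = 0, residual_weight = 0, residual_vector = std_basis 0\<rparr>"
| "greedy_states w \<xi> (Suc N) = fst (greedy_step w (\<xi> N) (greedy_states w \<xi> N))"

definition greedy_vectors :: "(nat \<Rightarrow> nat \<Rightarrow> complex) \<Rightarrow> (nat \<Rightarrow> real) \<Rightarrow> nat \<Rightarrow> nat \<Rightarrow> complex" where
  "greedy_vectors w \<xi> N = snd (greedy_step w (\<xi> N) (greedy_states w \<xi> N))"

definition allocated :: "(nat \<Rightarrow> nat \<Rightarrow> complex) \<Rightarrow> greedy_state \<Rightarrow> (nat \<Rightarrow> complex) \<Rightarrow> nat \<Rightarrow> complex" where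
  "allocated w s x i = (\<Sum>m<used_vectors s. proj_onto (w m) x i)
                        - of_real (residual_weight s) * proj_onto (residual_vector s) x i"

definition valid_greedy_state :: "nat \<Rightarrow> greedy_state \<Rightarrow> bool" where
  "valid_greedy_state n s \<longleftrightarrow>
     used_vectors s \<le> n \<and> 0 \<le> residual_weight s \<and> unit_l2 (residual_vector s)"

text \<open>The split branch of \<open>greedy_step\<close> reads \<open>w (used_vectors s)\<close>, a unit vector only while
  \<open>used_vectors s < n\<close>; the last hypothesis on \<open>c\<close> forces this whenever that branch is taken.\<close>

lemma greedy_step_correct:
  assumes w: "\<forall>m<n. unit_l2 (w m)" and s: "valid_greedy_state n s"
    and c: "0 \<le> c" "c \<le> 1" "real (used_vectors s) - residual_weight s + c \<le> n"
    and step: "greedy_step w c s = (s', p)"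
  shows "valid_greedy_state n s' \<and> unit_l2 p
    \<and> real (used_vectors s') - residual_weight s' = real (used_vectors s) - residual_weight s + c
    \<and> (\<forall>x\<in>l2. \<forall>i. allocated w s' x i = allocated w s x i + of_real c * proj_onto p x i)"
proof -
  have s_props: "used_vectors s \<le> n" "0 \<le> residual_weight s" "unit_l2 (residual_vector s)"
    using s by (simp_all add: valid_greedy_state_def)
  consider (take) "c \<le> residual_weight s" | (split) "residual_weight s < c"
    by linarith
  then show ?thesis
  proof cases
    case take
    then have "s' = s\<lparr>residual_weight := residual_weight s - c\<rparr>" "p = residual_vector s"
      using step by (simp_all add: greedy_step_def)
    then show ?thesis
      using s_props take by (simp add: valid_greedy_state_def allocated_def algebra_simps)
  next
    case split
    let ?k = "used_vectors s" and ?r = "residual_weight s" and ?R = "residual_vector s"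
    obtain q where pq: "split_pair ?R (w ?k) ?r c = (p, q)"
      and s': "s' = \<lparr>used_vectors = Suc ?k, residual_weight = ?r + 1 - c, residual_vector = q\<rparr>"
      using step split by (auto simp: greedy_step_def split: prod.splits)
    have "?k < n"
      using c(3) split by linarith
    note split_spec = splits_into_split_pair[OF s_props(3) w[rule_format, OF this] s_props(2) split c(2) pq,
      unfolded splits_into_def]
    have "allocated w s' x i = allocated w s x i + of_real c * proj_onto p x i" if "x \<in> l2" for x i
    proof -
      have "of_real ?r * proj_onto ?R x i + proj_onto (w ?k) x i
          = of_real c * proj_onto p x i + of_real (?r + 1 - c) * proj_onto q x i"
        using split_spec that by blast
      then have "proj_onto (w ?k) x i - of_real (?r + 1 - c) * proj_onto q x i
          = of_real c * proj_onto p x i - of_real ?r * proj_onto ?R x i"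
        by (simp add: algebra_simps)
      then show ?thesis
        by (simp add: allocated_def s')
    qed
    then show ?thesis
      using split_spec s_props \<open>?k < n\<close> split c by (auto simp: s' valid_greedy_state_def)
  qed
qed

lemma greedy_invariant:
  fixes n :: nat and \<xi> :: "nat \<Rightarrow> real"
  assumes w: "\<forall>m<n. unit_l2 (w m)" and \<xi>: "\<forall>j. 0 \<le> \<xi> j \<and> \<xi> j \<le> 1"
    and bound: "\<forall>N. (\<Sum>j<N. \<xi> j) \<le> n"
  shows "valid_greedy_state n (greedy_states w \<xi> N)
    \<and> real (used_vectors (greedy_states w \<xi> N)) - residual_weight (greedy_states w \<xi> N) = (\<Sum>j<N. \<xi> j)
    \<and> (\<forall>x\<in>l2. \<forall>i. allocated w (greedy_states w \<xi> N) x i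
                  = (\<Sum>j<N. of_real (\<xi> j) * proj_onto (greedy_vectors w \<xi> j) x i))"
proof (induction N)
  case 0
  show ?case
    by (simp add: valid_greedy_state_def unit_l2_std_basis allocated_def)
next
  case (Suc N)
  let ?s = "greedy_states w \<xi> N"
  have step: "greedy_step w (\<xi> N) ?s = (greedy_states w \<xi> (Suc N), greedy_vectors w \<xi> N)"
    by (simp add: greedy_vectors_def)
  have "real (used_vectors ?s) - residual_weight ?s + \<xi> N \<le> n"
    using Suc.IH bound[rule_format, of "Suc N"] by simp
  note correct = greedy_step_correct[OF w conjunct1[OF Suc.IH] _ _ this step]
  show ?case
    using Suc.IH correct \<xi> by simp
qed

lemma unit_l2_greedy_vectors:
  fixes n :: nat and \<xi> :: "nat \<Rightarrow> real"
  assumes w: "\<forall>m<n. unit_l2 (w m)" and \<xi>: "\<forall>j. 0 \<le> \<xi> j \<and> \<xi> j \<le> 1"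
    and bound: "\<forall>N. (\<Sum>j<N. \<xi> j) \<le> n"
  shows "unit_l2 (greedy_vectors w \<xi> N)"
proof -
  note inv = greedy_invariant[OF assms]
  have "real (used_vectors (greedy_states w \<xi> N)) - residual_weight (greedy_states w \<xi> N) + \<xi> N \<le> n"
    using inv[of N] bound[rule_format, of "Suc N"] by simp
  moreover have "greedy_step w (\<xi> N) (greedy_states w \<xi> N) = (greedy_states w \<xi> (Suc N), greedy_vectors w \<xi> N)"
    by (simp add: greedy_vectors_def)
  ultimately show ?thesis
    using greedy_step_correct[OF w conjunct1[OF inv[of N]]] \<xi> by blast
qed

lemma partial_sum_le_sums:
  fixes f :: "nat \<Rightarrow> real"
  assumes "f sums s" "\<forall>j. 0 \<le> f j"
  shows "(\<Sum>j<N. f j) \<le> s"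
  using sum_le_suminf[of f "{..<N}"] assms by (auto simp: sums_iff)

lemma greedy_states_stabilize:
  fixes n :: nat and \<xi> :: "nat \<Rightarrow> real"
  assumes w: "\<forall>m<n. unit_l2 (w m)" and \<xi>: "\<forall>j. 0 \<le> \<xi> j \<and> \<xi> j \<le> 1"
    and sums: "\<xi> sums real n"
  obtains N0 where "\<And>N. N \<ge> N0 \<Longrightarrow> used_vectors (greedy_states w \<xi> N) = n
    \<and> residual_vector (greedy_states w \<xi> N) = residual_vector (greedy_states w \<xi> N0)"
proof -
  define S where "S N = (\<Sum>j<N. \<xi> j)" for N
  define s where "s N = greedy_states w \<xi> N" for N
  have "\<forall>N. S N \<le> n"
    using partial_sum_le_sums[OF sums] \<xi> unfolding S_def by blast
  note inv = greedy_invariant[OF w \<xi> this[unfolded S_def], folded S_def s_def]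
  have "S \<longlonglongrightarrow> real n"
    using sums by (simp add: sums_def S_def[abs_def])
  then have "\<forall>\<^sub>F N in sequentially. real n - 1 < S N"
    by (rule order_tendstoD) simp
  then obtain N0 where N0: "\<And>N. N \<ge> N0 \<Longrightarrow> real n - 1 < S N"
    by (auto simp: eventually_sequentially)
  have used: "used_vectors (s N) = n" if "N \<ge> N0" for N
    using inv[of N] N0[OF that] by (auto simp: valid_greedy_state_def)
  have "residual_vector (s N) = residual_vector (s N0)" if "N \<ge> N0" for N
    using that
  proof (induction N rule: dec_induct)
    case (step N)
    have "\<xi> N \<le> residual_weight (s N)"
      using inv[of N] inv[of "Suc N"] used[of N] used[of "Suc N"] step.hyps
      by (auto simp: S_def valid_greedy_state_def)
    then show ?case
      using step.IH by (simp add: s_def greedy_step_def)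
  qed simp
  then show ?thesis
    using that used unfolding s_def by blast
qed

lemma greedy_partial_sums_tendsto:
  fixes n :: nat and \<xi> :: "nat \<Rightarrow> real"
  assumes w: "\<forall>m<n. unit_l2 (w m)" and \<xi>: "\<forall>j. 0 \<le> \<xi> j \<and> \<xi> j \<le> 1"
    and sums: "\<xi> sums real n" and x: "x \<in> l2"
  shows "(\<lambda>N. l2_norm (\<lambda>i. (\<Sum>m<n. proj_onto (w m) x i)
                          - (\<Sum>j<N. of_real (\<xi> j) * proj_onto (greedy_vectors w \<xi> j) x i))) \<longlonglongrightarrow> 0"
proof -
  define S where "S N = (\<Sum>j<N. \<xi> j)" for N
  define s where "s N = greedy_states w \<xi> N" for N
  have "\<forall>N. S N \<le> n"
    using partial_sum_le_sums[OF sums] \<xi> unfolding S_def by blast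
  note inv = greedy_invariant[OF w \<xi> this[unfolded S_def], folded S_def s_def]
  obtain N0 where N0: "\<And>N. N \<ge> N0 \<Longrightarrow> used_vectors (s N) = n \<and> residual_vector (s N) = residual_vector (s N0)"
    using greedy_states_stabilize[OF w \<xi> sums] unfolding s_def by blast
  define z where "z = proj_onto (residual_vector (s N0)) x"
  have "z \<in> l2"
    using inv[of N0] unfolding z_def by (simp add: proj_onto_l2 valid_greedy_state_def unit_l2_def)
  have remainder: "l2_norm (\<lambda>i. (\<Sum>m<n. proj_onto (w m) x i)
             - (\<Sum>j<N. of_real (\<xi> j) * proj_onto (greedy_vectors w \<xi> j) x i)) = \<bar>n - S N\<bar> * l2_norm z"
    if "N \<ge> N0" for N
  proof -
    have weight: "residual_weight (s N) = n - S N"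
      using inv[of N] N0[OF that] by simp
    have "(\<Sum>m<n. proj_onto (w m) x i) - of_real (n - S N) * z i
        = (\<Sum>j<N. of_real (\<xi> j) * proj_onto (greedy_vectors w \<xi> j) x i)" for i
      using inv[of N] x N0[OF that] unfolding z_def allocated_def by (simp add: weight)
    then have "(\<lambda>i. (\<Sum>m<n. proj_onto (w m) x i)
             - (\<Sum>j<N. of_real (\<xi> j) * proj_onto (greedy_vectors w \<xi> j) x i)) = (\<lambda>i. of_real (n - S N) * z i)"
      by (intro ext) (simp add: diff_eq_eq add.commute)
    then show ?thesis
      using l2_norm_scale[OF \<open>z \<in> l2\<close>, of "of_real (n - S N)"] by (simp only: norm_of_real)
  qed
  have "\<forall>\<^sub>F N in sequentially. \<bar>n - S N\<bar> * l2_norm z = l2_norm (\<lambda>i. (\<Sum>m<n. proj_onto (w m) x i)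
             - (\<Sum>j<N. of_real (\<xi> j) * proj_onto (greedy_vectors w \<xi> j) x i))"
    by (rule eventually_sequentiallyI[of N0]) (simp add: remainder)
  moreover have "(\<lambda>N. n - S N) \<longlonglongrightarrow> 0"
    using tendsto_diff[OF tendsto_const sums[unfolded sums_def], of "real n"] by (simp add: S_def[abs_def])
  then have "(\<lambda>N. \<bar>n - S N\<bar> * l2_norm z) \<longlonglongrightarrow> 0"
    by (intro tendsto_mult_left_zero tendsto_rabs_zero)
  ultimately show ?thesis
    by (rule Lim_transform_eventually[rotated])
qed

theorem lemma3p3:
  fixes A :: "(nat \<Rightarrow> complex) \<Rightarrow> (nat \<Rightarrow> complex)"
    and E :: "nat \<Rightarrow> (nat \<Rightarrow> complex) \<Rightarrow> (nat \<Rightarrow> complex)"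
    and n :: nat
    and \<xi> :: "nat \<Rightarrow> real"
  assumes "\<forall>j<n. rank_one_projection (E j)"
    and "\<forall>x\<in>l2. A x = (\<lambda>i. \<Sum>j<n. E j x i)"
    and "\<forall>j. 0 \<le> \<xi> j \<and> \<xi> j \<le> 1"
    and "(\<lambda>j. complex_of_real (\<xi> j)) sums op_trace A"
  shows "\<xi> \<in> Adm A"
proof -
  have "\<forall>m. \<exists>v. m < n \<longrightarrow> unit_l2 v \<and> (\<forall>x\<in>l2. E m x = proj_onto v x)"
    using assms(1) rank_one_projection_imp_proj_onto by metis
  then obtain w where w: "\<forall>m<n. unit_l2 (w m)" and E: "\<forall>m<n. \<forall>x\<in>l2. E m x = proj_onto (w m) x"
    using choice by metis
  have A: "\<forall>x\<in>l2. A x = (\<lambda>i. \<Sum>m<n. proj_onto (w m) x i)"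
    using assms(2) E by simp
  have sums: "\<xi> sums real n"
    using assms(4) op_trace_sum_proj_onto[OF w A] sums_of_real_iff by fastforce
  have units: "unit_l2 (greedy_vectors w \<xi> j)" for j
    using unit_l2_greedy_vectors[OF w assms(3)] partial_sum_le_sums[OF sums] assms(3) by blast
  show ?thesis
    unfolding Adm_def
  proof (intro CollectI conjI exI[of _ "\<lambda>j. proj_onto (greedy_vectors w \<xi> j)"] allI ballI)
    show "bdd_above (range \<xi>)"
      using assms(3) by (intro bdd_aboveI[of _ 1]) auto
    show "rank_one_projection (proj_onto (greedy_vectors w \<xi> j))" for j
      by (rule rank_one_projection_proj_onto[OF units])
    show "(\<lambda>N. l2_norm (\<lambda>i. A x i - (\<Sum>j<N. of_real (\<xi> j) * proj_onto (greedy_vectors w \<xi> j) x i)))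
        \<longlonglongrightarrow> 0" if "x \<in> l2" for x
      using greedy_partial_sums_tendsto[OF w assms(3) sums that] A that by simp
  qed (use assms(3) in auto)
qed

end
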